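(* Let $(K,w_K)$ be an $(n+1)$-dimensional simplicial complex with $w_K\equiv 1$ on a vertex set $V$, and let $(H,w_H)$ be an $(n+1)$-dimensional subcomplex with $w_H\equiv 1$ on the faces of $H$, such that their proper difference $(L,w_L)$ exists, i.e. $L=K$ as simplicial complexes, $w_L=w_K-w_H$ (so $w_L=0$ on faces of $H$ and $w_L=1$ on the other faces of $K$), and $\{F\in K: w_L(F)>0\}$ is a simplicial complex. Let $N=|S_n(K)|$ and let $\lambda_1\le\dots\le\lambda_N$ and $\theta_1\le\dots\le\theta_N$ be the eigenvalues of $\mathcal{L}^{up}_n(K,w_K)$ (the combinatorial up-Laplacian of $K$) and $\mathcal{L}^{up}_n(L,w_L)$, respectively. Put $D_{\mathcal{W}}=\dim C^{n+1}(H,\mathbb{R})-\dim H^{n+1}(H,\mathbb{R})$ and $D_H=\dim C^n(H,\mathbb{R})$, and use the conventions $\lambda_j=0$ for $1-D_{\mathcal{W}}\le j\le 0$ and $\lambda_j=|V|$ for $N+1\le j\le N+D_H$. Then for all $k=1,\dots,N$, $$\lambda_{k-D_{\mathcal{W}}}\le\theta_k\le\lambda_{k+D_H}.$$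
   Context: $S_j(K)$ is the set of $j$-faces of $K$; $C^j(K,\mathbb{R})$ is the space of real cochains on oriented $j$-faces (antisymmetric under orientation reversal), with coboundary $(\delta_j f)([v_0,\dots,v_{j+1}])=\sum_i(-1)^i f([v_0,\dots,\hat v_i,\dots,v_{j+1}])$. For a weight function $w\ge 0$ on faces, $C^j$ carries $(f,g)=\sum_{F\in S_j}w(F)f([F])g([F])$, and the formal adjoint is $(\delta_j^*\bar f)([F])=\sum_{\bar F\supset F,\ \bar F\in S_{j+1}}\frac{w(\bar F)}{w(F)}\mathrm{sgn}([F],\partial[\bar F])\bar f([\bar F])$ if $w(F)\neq0$ and $0$ otherwise, where $\mathrm{sgn}([v_0,\dots,\hat v_i,\dots,v_{j+1}],\partial[v_0,\dots,v_{j+1}])=(-1)^i$. The up-Laplacian is $\mathcal{L}^{up}_n(K,w)=\delta_n^*\delta_n$ on $C^n(K,\mathbb{R})$; a weight function with zeros gives a degenerate weighted complex. $H^{n+1}(H,\mathbb{R})$ is simplicial cohomology with real coefficients. *)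

theory Defs
  imports "Jordan_Normal_Form.Char_Poly" "Jordan_Normal_Form.Matrix_Kernel" "Jordan_Normal_Form.DL_Rank"
begin

definition is_complex :: "'a set set \<Rightarrow> bool" where
  "is_complex K \<longleftrightarrow> (\<forall>F\<in>K. F \<noteq> {} \<and> finite F) \<and>
                     (\<forall>F\<in>K. \<forall>G. G \<subseteq> F \<and> G \<noteq> {} \<longrightarrow> G \<in> K)"

definition complex_on :: "'a set \<Rightarrow> 'a set set \<Rightarrow> bool" where
  "complex_on V K \<longleftrightarrow> finite V \<and> is_complex K \<and> \<Union>K = V"

definition complex_dim :: "'a set set \<Rightarrow> nat \<Rightarrow> bool" where
  "complex_dim K d \<longleftrightarrow> (\<exists>F\<in>K. card F = d + 1) \<and> (\<forall>F\<in>K. card F \<le> d + 1)"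

definition faces :: "nat \<Rightarrow> 'a set set \<Rightarrow> 'a set set" where
  "faces j K = {F \<in> K. card F = j + 1}"

(* Oriented faces are represented by the increasing orientation w.r.t. the
   linear order on vertices; a cochain is determined by its values there.
   sgn([F], \<partial>[Fb]) = (-1)^i where the removed vertex is the i-th (from 0)
   vertex of Fb in increasing order. *)
definition sgn_face :: "'a::linorder set \<Rightarrow> 'a set \<Rightarrow> real" where
  "sgn_face F Fb = (-1) ^ card {v \<in> Fb. v < the_elem (Fb - F)}"

definition cob :: "'a::linorder set set \<Rightarrow> nat \<Rightarrow> ('a set \<Rightarrow> real) \<Rightarrow> 'a set \<Rightarrow> real" where
  "cob K j f Fb = (\<Sum>G\<in>{G \<in> faces j K. G \<subseteq> Fb}. sgn_face G Fb * f G)"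

(* formal adjoint \<delta>_j^* : C^(j+1) \<rightarrow> C^j w.r.t. the weight w *)
definition cob_adj :: "'a::linorder set set \<Rightarrow> ('a set \<Rightarrow> real) \<Rightarrow> nat \<Rightarrow> ('a set \<Rightarrow> real) \<Rightarrow> 'a set \<Rightarrow> real" where
  "cob_adj K w j g F =
     (if w F \<noteq> 0 then
        (\<Sum>Fb\<in>{Fb \<in> faces (j+1) K. F \<subseteq> Fb}. (w Fb / w F) * sgn_face F Fb * g Fb)
      else 0)"

definition up_lap :: "'a::linorder set set \<Rightarrow> ('a set \<Rightarrow> real) \<Rightarrow> nat \<Rightarrow> ('a set \<Rightarrow> real) \<Rightarrow> 'a set \<Rightarrow> real" where
  "up_lap K w n f = cob_adj K w n (cob K n f)"

(* a fixed enumeration of the j-faces (eigenvalues do not depend on it) *)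
definition face_list :: "nat \<Rightarrow> 'a set set \<Rightarrow> 'a set list" where
  "face_list j K = (SOME xs. distinct xs \<and> set xs = faces j K)"

definition ind_face :: "'a set \<Rightarrow> 'a set \<Rightarrow> real" where
  "ind_face G F = (if F = G then 1 else 0)"

definition up_lap_mat :: "'a::linorder set set \<Rightarrow> ('a set \<Rightarrow> real) \<Rightarrow> nat \<Rightarrow> real mat" where
  "up_lap_mat K w n =
     (let fl = face_list n K; N = length fl in
      mat N N (\<lambda>(i,k). up_lap K w n (ind_face (fl ! k)) (fl ! i)))"

definition cob_mat :: "'a::linorder set set \<Rightarrow> nat \<Rightarrow> real mat" where
  "cob_mat K j =
     (let fl = face_list j K; gl = face_list (j+1) K in
      mat (length gl) (length fl) (\<lambda>(i,k). cob K j (ind_face (fl ! k)) (gl ! i)))"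

definition cohom_dim_succ :: "'a::linorder set set \<Rightarrow> nat \<Rightarrow> nat" where
  "cohom_dim_succ K j =
     kernel_dim (cob_mat K (j+1)) - vec_space.rank (dim_row (cob_mat K j)) (cob_mat K j)"

end

theory Submission
  imports Defs "HOL-Computational_Algebra.Field_as_Ring" "HOL-Computational_Algebra.Polynomial_Factorial"
    "Jordan_Normal_Form.Jordan_Normal_Form_Existence" "Jordan_Normal_Form.Jordan_Normal_Form_Uniqueness"
begin

(* Order the n-faces of K with those of H first. Both H and K - H are closed under taking
   nonempty subfaces, so no (n+1)-face of K contains an n-face of H together with an n-face
   of K - H. Hence the unit-weight up-Laplacian of K is block diagonal, with the up-Laplacian
   of H (that is, d^T d for the coboundary d of H) and that of K - H as blocks, while the
   up-Laplacian of (L, w_L) has the blocks 0 and the same second block. So the spectrum theta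
   arises from lambda by replacing the D_H eigenvalues of the H-block by zeros, and at least
   dim ker d = D_H - rank d = D_H - D_W of them were zero already. Comparing the counting
   functions t |-> #{k. lambda_k <= t} and t |-> #{k. theta_k <= t} gives both inequalities.
   The padding values 0 and |V| are harmless because every eigenvalue of a unit-weight
   up-Laplacian lies in [0, |V|]: the up- and down-Laplacians of the full simplex on V add up
   to |V| times the identity. *)

section \<open>Counting functions of sorted sequences\<close>

lemma sorted_le_iff_le_card:
  fixes lam :: "nat \<Rightarrow> 'b::linorder"
  assumes sorted: "\<forall>i j. 1 \<le> i \<longrightarrow> i \<le> j \<longrightarrow> j \<le> N \<longrightarrow> lam i \<le> lam j"
    and j: "1 \<le> j" "j \<le> N"
  shows "lam j \<le> t \<longleftrightarrow> j \<le> card {k\<in>{1..N}. lam k \<le> t}"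
proof
  assume "lam j \<le> t"
  then have "{1..j} \<subseteq> {k\<in>{1..N}. lam k \<le> t}"
    using sorted j by (auto intro: order_trans[of _ "lam j"])
  then show "j \<le> card {k\<in>{1..N}. lam k \<le> t}"
    using card_mono[of "{k\<in>{1..N}. lam k \<le> t}" "{1..j}"] by simp
next
  assume card: "j \<le> card {k\<in>{1..N}. lam k \<le> t}"
  show "lam j \<le> t"
  proof (rule ccontr)
    assume "\<not> lam j \<le> t"
    then have "{k\<in>{1..N}. lam k \<le> t} \<subseteq> {1..<j}"
      using sorted j by (auto simp: not_le intro: le_less_trans) (meson le_less_trans not_le)
    then show False
      using card card_mono[of "{1..<j}" "{k\<in>{1..N}. lam k \<le> t}"] j by simp
  qed
qed

lemma size_filter_image_mset_set:
  assumes "finite A"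
  shows "size {#x \<in># image_mset f (mset_set A). P x#} = card {a\<in>A. P (f a)}"
  using assms by (simp add: image_mset_filter_mset_swap[symmetric] filter_mset_mset_set comp_def)

lemma filter_replicate_mset:
  "{#y \<in># replicate_mset n x. P y#} = (if P x then replicate_mset n x else {#})"
  by (induction n) auto

lemma card_le_eq_size_filter:
  fixes lam :: "nat \<Rightarrow> 'b::linorder"
  assumes "image_mset lam (mset_set {1..N}) = M"
  shows "card {k\<in>{1..N}. lam k \<le> t} = size {#x \<in># M. x \<le> t#}"
  unfolding assms[symmetric] by (simp add: size_filter_image_mset_set)

lemma interlacing_lower:
  fixes lam theta :: "nat \<Rightarrow> 'b::{linorder,zero}"
  assumes lam: "\<forall>i j. 1 \<le> i \<longrightarrow> i \<le> j \<longrightarrow> j \<le> N \<longrightarrow> lam i \<le> lam j"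
    and theta: "\<forall>i j. 1 \<le> i \<longrightarrow> i \<le> j \<longrightarrow> j \<le> N \<longrightarrow> theta i \<le> theta j"
    and spec_lam: "image_mset lam (mset_set {1..N}) = R + M"
    and spec_theta: "image_mset theta (mset_set {1..N}) = replicate_mset (size R) 0 + M"
    and zeros: "size R \<le> count R 0 + D"
    and k: "D < k" "k \<le> N"
  shows "lam (k - D) \<le> theta k"
proof -
  let ?t = "theta k"
  let ?cnt = "\<lambda>A. size {#x \<in># A. x \<le> ?t#}"
  have "k \<le> card {i\<in>{1..N}. theta i \<le> ?t}"
    using sorted_le_iff_le_card[OF theta, of k ?t] k by simp
  also have "\<dots> = (if 0 \<le> ?t then size R else 0) + ?cnt M"
    unfolding card_le_eq_size_filter[OF spec_theta] by (simp add: filter_replicate_mset)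
  also have "\<dots> \<le> ?cnt R + ?cnt M + D"
  proof (cases "0 \<le> ?t")
    case True
    have "count R 0 = count {#x \<in># R. x \<le> ?t#} 0" using True by simp
    also have "\<dots> \<le> ?cnt R" by (rule count_le_size)
    finally show ?thesis using True zeros by simp
  qed simp
  also have "?cnt R + ?cnt M = card {i\<in>{1..N}. lam i \<le> ?t}"
    unfolding card_le_eq_size_filter[OF spec_lam] by simp
  finally show ?thesis
    using sorted_le_iff_le_card[OF lam, of "k - D" ?t] k by simp
qed

lemma interlacing_upper:
  fixes lam theta :: "nat \<Rightarrow> 'b::{linorder,zero}"
  assumes lam: "\<forall>i j. 1 \<le> i \<longrightarrow> i \<le> j \<longrightarrow> j \<le> N \<longrightarrow> lam i \<le> lam j"
    and theta: "\<forall>i j. 1 \<le> i \<longrightarrow> i \<le> j \<longrightarrow> j \<le> N \<longrightarrow> theta i \<le> theta j"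
    and spec_lam: "image_mset lam (mset_set {1..N}) = R + M"
    and spec_theta: "image_mset theta (mset_set {1..N}) = replicate_mset (size R) 0 + M"
    and k: "1 \<le> k" "k + size R \<le> N"
  shows "theta k \<le> lam (k + size R)"
proof -
  let ?s = "lam (k + size R)"
  let ?cnt = "\<lambda>A. size {#x \<in># A. x \<le> ?s#}"
  have "k + size R \<le> card {i\<in>{1..N}. lam i \<le> ?s}"
    using sorted_le_iff_le_card[OF lam, of "k + size R" ?s] k by simp
  also have "\<dots> = ?cnt R + ?cnt M"
    unfolding card_le_eq_size_filter[OF spec_lam] by simp
  also have "\<dots> \<le> size R + ?cnt M"
    by (simp add: size_filter_mset_lesseq)
  finally have "k \<le> ?cnt M" by simp
  also have "\<dots> \<le> card {i\<in>{1..N}. theta i \<le> ?s}"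
    unfolding card_le_eq_size_filter[OF spec_theta] by simp
  finally show ?thesis
    using sorted_le_iff_le_card[OF theta, of k ?s] k by simp
qed

lemma interlacing_padded:
  fixes lam theta :: "nat \<Rightarrow> real"
  assumes lam: "\<forall>i j. 1 \<le> i \<longrightarrow> i \<le> j \<longrightarrow> j \<le> N \<longrightarrow> lam i \<le> lam j"
    and theta: "\<forall>i j. 1 \<le> i \<longrightarrow> i \<le> j \<longrightarrow> j \<le> N \<longrightarrow> theta i \<le> theta j"
    and spec_lam: "image_mset lam (mset_set {1..N}) = R + M"
    and spec_theta: "image_mset theta (mset_set {1..N}) = replicate_mset (size R) 0 + M"
    and zeros: "size R \<le> count R 0 + D"
    and range: "\<forall>x\<in>#R + M. 0 \<le> x \<and> x \<le> c" and "0 \<le> c"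
    and k: "k \<in> {1..N}"
  shows "(if int k - int D \<le> 0 then 0 else if int k - int D > int N then c else lam (nat (int k - int D)))
      \<le> theta k \<and>
    theta k \<le> (if int k + int (size R) \<le> 0 then 0
      else if int k + int (size R) > int N then c else lam (nat (int k + int (size R))))"
proof -
  have "theta k \<in># replicate_mset (size R) 0 + M"
    unfolding spec_theta[symmetric] using k by simp
  then have "0 \<le> theta k \<and> theta k \<le> c"
    using range \<open>0 \<le> c\<close> by (auto split: if_splits)
  then show ?thesis
    using interlacing_lower[OF lam theta spec_lam spec_theta zeros, of k]
      interlacing_upper[OF lam theta spec_lam spec_theta, of k] k
    by (auto simp: nat_diff_distrib simp flip: of_nat_add)
qed

lemma char_poly_block_diag:
  fixes A D :: "'a::field mat"
  assumes A: "A \<in> carrier_mat n n" and D: "D \<in> carrier_mat m m"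
  shows "char_poly (four_block_mat A (0\<^sub>m n m) (0\<^sub>m m n) D) = char_poly A * char_poly D"
proof -
  have "char_poly_matrix (four_block_mat A (0\<^sub>m n m) (0\<^sub>m m n) D)
      = four_block_mat (char_poly_matrix A) (0\<^sub>m n m) (0\<^sub>m m n) (char_poly_matrix D)"
    using A D by (intro eq_matI) (auto simp: char_poly_matrix_def)
  then show ?thesis
    unfolding char_poly_def
    by (simp, subst det_four_block_mat_upper_right_zero[of "char_poly_matrix A" n _ m]) (use A D in auto)
qed

lemma char_poly_zero_mat: "char_poly (0\<^sub>m n n :: 'a::field mat) = [:0, 1:] ^ n"
proof -
  have "char_poly (0\<^sub>m n n :: 'a mat) = (\<Prod>a\<leftarrow>diag_mat (0\<^sub>m n n :: 'a mat). [:- a, 1:])"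
    by (rule char_poly_upper_triangular) (auto simp: upper_triangular_def)
  also have "diag_mat (0\<^sub>m n n :: 'a mat) = replicate n 0"
    by (intro nth_equalityI) (auto simp: diag_mat_def)
  finally show ?thesis by (simp add: prod_list_replicate)
qed

lemma char_matrix_zero: "A \<in> carrier_mat n n \<Longrightarrow> char_matrix A 0 = A"
  unfolding char_matrix_def by (intro eq_matI) auto

lemma kernel_dim_mono:
  fixes A B :: "'a::field mat"
  assumes A: "A \<in> carrier_mat nrA nc" and B: "B \<in> carrier_mat nrB nc"
    and sub: "mat_kernel A \<subseteq> mat_kernel B"
  shows "kernel_dim A \<le> kernel_dim B"
proof -
  interpret KA: kernel nrA nc A by unfold_locales (rule A)
  interpret KB: kernel nrB nc B by unfold_locales (rule B)
  obtain b where b: "finite b" "KA.basis b" using kernel_basis_exists[OF A] by blast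
  obtain c where c: "finite c" "KB.basis c" using kernel_basis_exists[OF B] by blast
  have bA: "b \<subseteq> mat_kernel A" and "KA.lin_indpt b"
    using b(2) unfolding KA.Ker.basis_def by auto
  then have "KB.lin_indpt b" using KA.lindep_same[OF bA] KB.lindep_same bA sub by auto
  moreover have "KB.Ker.fin_dim" using c unfolding KB.Ker.fin_dim_def KB.Ker.basis_def by auto
  ultimately have "card b \<le> KB.dim" using KB.Ker.li_le_dim(2) bA sub by auto
  then show ?thesis using KA.Ker.dim_basis[OF b] by simp
qed

lemma kernel_dim_le_mult_left:
  fixes A B :: "'a::field mat"
  assumes "A \<in> carrier_mat nr nc" "B \<in> carrier_mat m nr"
  shows "kernel_dim A \<le> kernel_dim (B * A)"
  using assms by (intro kernel_dim_mono[OF _ _ mat_kernel_mult_subset]) auto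

lemma rank_plus_kernel_dim:
  fixes A :: "'a::field mat"
  assumes A: "A \<in> carrier_mat nr nc"
  shows "vec_space.rank nr A + kernel_dim A = nc"
proof -
  interpret NR: vec_space "TYPE('a)" nr .
  interpret NC: vec_space "TYPE('a)" nc .
  interpret LM: linear_map class_ring "module_vec TYPE('a) nc" "module_vec TYPE('a) nr" "\<lambda>v. A *\<^sub>v v"
  proof (intro linear_map.intro mod_hom.intro mod_hom_axioms.intro)
    show "(*\<^sub>v) A \<in> module_hom class_ring (module_vec TYPE('a) nc) (module_vec TYPE('a) nr)"
      using A by (auto simp: module_hom_def mult_add_distrib_mat_vec mult_mat_vec)
  qed (simp_all add: vec_vs NC.module_axioms NR.module_axioms)
  have "LM.kerT = mat_kernel A"
    using A unfolding mod_hom.ker_def[OF LM.mod_hom_axioms] mat_kernel_def by auto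
  then have "vectorspace.dim class_ring (NC.vs LM.kerT) = kernel_dim A"
    unfolding kernel_dim_def using A by simp
  moreover have "LM.imT = NR.col_space A"
    using A unfolding mod_hom.im_def[OF LM.mod_hom_axioms] NR.col_space_eq[OF A] by auto
  then have "vectorspace.dim class_ring (NR.vs LM.imT) = NR.rank A"
    unfolding NR.rank_def NR.col_space_def by simp
  ultimately show ?thesis using LM.rank_nullity_main(1) NC.dim_is_n by simp
qed

lemma rank_le_dim_row:
  fixes A :: "'a::field mat"
  assumes A: "A \<in> carrier_mat nr nc"
  shows "vec_space.rank nr A \<le> nr"
proof -
  interpret NR: vec_space "TYPE('a)" nr .
  have "subspace class_ring (NR.span (set (cols A))) NR.V"
    using A by (intro NR.span_is_subspace) (metis carrier_matD(1) cols_dim)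
  then show ?thesis
    using NR.subspace_dim[OF _ NR.fin_dim NR.fin_dim_span_cols[OF A]]
    unfolding NR.rank_def NR.dim_is_n by simp
qed

lemma kernel_dim_no_rows:
  fixes A :: "'a::field mat"
  assumes A: "A \<in> carrier_mat 0 nc"
  shows "kernel_dim A = nc"
proof -
  have "A = 0\<^sub>m 0 nc" using A by (intro eq_matI) auto
  then show ?thesis using rank_plus_kernel_dim[OF A] by (simp add: vec_space.rank_0I)
qed

lemma monic_dvd_prod_linear:
  fixes p :: "'a::field_gcd poly"
  assumes "p dvd (\<Prod>a\<leftarrow>as. [:- a, 1:])" "lead_coeff p = 1"
  shows "\<exists>bs. p = (\<Prod>b\<leftarrow>bs. [:- b, 1:])"
  using assms
proof (induction as arbitrary: p)
  case Nil
  then have "degree p = 0" by (simp add: is_unit_iff_degree)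
  with Nil.prems(2) have "p = 1" by (metis degree_0_id lead_coeff_pCons(2) one_pCons pCons_0_0)
  then show ?case by (intro exI[of _ "[]"]) simp
next
  case (Cons a as)
  let ?q = "\<Prod>a\<leftarrow>as. [:- a, 1:]"
  have dvd: "p dvd [:- a, 1:] * ?q" using Cons.prems(1) by simp
  show ?case
  proof (cases "poly p a = 0")
    case True
    then obtain p' where p': "p = [:- a, 1:] * p'" by (metis dvdE poly_eq_0_iff_dvd)
    have "p' dvd ?q" using dvd unfolding p' by (subst (asm) dvd_times_left_cancel_iff) auto
    moreover have "lead_coeff p' = 1" using Cons.prems(2) unfolding p' lead_coeff_mult by simp
    ultimately obtain bs where "p' = (\<Prod>b\<leftarrow>bs. [:- b, 1:])" using Cons.IH by blast
    then show ?thesis using p' by (intro exI[of _ "a # bs"]) simp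
  next
    case False
    have "prime_elem [:- a, 1:]" by (rule prime_elem_linear_field_poly) simp
    moreover have "\<not> [:- a, 1:] dvd p" using False poly_eq_0_iff_dvd by blast
    ultimately have "coprime [:- a, 1:] p" using prime_elem_imp_coprime by blast
    then have "coprime p [:- a, 1:]" by (simp add: coprime_commute)
    then have "p dvd ?q" using dvd coprime_dvd_mult_right_iff by blast
    then show ?thesis using Cons.IH Cons.prems(2) by blast
  qed
qed

lemma char_poly_dvd_split:
  fixes A :: "'a::field_gcd mat"
  assumes A: "A \<in> carrier_mat n n" and S: "finite S"
    and dvd: "char_poly A dvd (\<Prod>k\<in>S. [:- f k, 1:])"
  obtains bs where "char_poly A = (\<Prod>b\<leftarrow>bs. [:- b, 1:])" and "length bs = n"
proof -
  obtain xs where xs: "distinct xs" "set xs = S" using finite_distinct_list[OF S] by blast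
  have "(\<Prod>k\<in>S. [:- f k, 1:]) = (\<Prod>a\<leftarrow>map f xs. [:- a, 1:])"
    using prod.distinct_set_conv_list[OF xs(1), of "\<lambda>k. [:- f k, 1:]"] xs(2) by (simp add: comp_def)
  then have "char_poly A dvd (\<Prod>a\<leftarrow>map f xs. [:- a, 1:])" using dvd by simp
  moreover have "lead_coeff (char_poly A) = 1" using degree_monic_char_poly[OF A] by simp
  ultimately obtain bs where bs: "char_poly A = (\<Prod>b\<leftarrow>bs. [:- b, 1:])"
    using monic_dvd_prod_linear by blast
  moreover have "length bs = n"
    using degree_monic_char_poly[OF A] degree_linear_factors[of uminus bs] bs by simp
  ultimately show thesis using that by blast
qed

lemma kernel_dim_le_order:
  fixes A :: "'a::{conjugatable_ordered_field, real_normed_field} mat"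
  assumes A: "A \<in> carrier_mat n n" and split: "char_poly A = (\<Prod>a\<leftarrow>as. [:- a, 1:])"
  shows "kernel_dim (char_matrix A e) \<le> Polynomial.order e (char_poly A)"
proof -
  obtain n_as where jnf: "jordan_nf A n_as" using jordan_nf_exists[OF A split] by blast
  have "kernel_dim (char_matrix A e) = dim_gen_eigenspace A e 1"
    unfolding dim_gen_eigenspace_def using A by simp
  also have "\<dots> = (\<Sum>n\<leftarrow>map fst [(n, e')\<leftarrow>n_as. e' = e]. min 1 n)"
    by (rule dim_gen_eigenspace[OF jnf])
  also have "\<dots> \<le> (\<Sum>n\<leftarrow>map fst [(n, e')\<leftarrow>n_as. e' = e]. n)"
    by (rule sum_list_mono) simp
  also have "\<dots> = Polynomial.order e (char_poly A)"
    unfolding jordan_nf_order[OF jnf] by (simp add: case_prod_beta' cong: filter_cong)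
  finally show ?thesis .
qed

lemma proots_prod_linear:
  fixes f :: "'b \<Rightarrow> 'a::idom"
  assumes "finite A"
  shows "proots (\<Prod>k\<in>A. [:- f k, 1:]) = image_mset f (mset_set A)"
  using assms by (induction A rule: finite_induct) (simp_all add: proots_mult prod_zero_iff del: mult_pCons_left)

lemma proots_prod_list_linear: "proots (\<Prod>b\<leftarrow>bs. [:- b, 1:]) = mset (bs :: 'a::idom list)"
proof (induction bs)
  case (Cons a bs)
  have "(\<Prod>b\<leftarrow>bs. [:- b, 1:]) \<noteq> (0 :: 'a poly)" by (auto simp: prod_list_zero_iff)
  then show ?case using Cons.IH by (simp add: proots_mult del: mult_pCons_left)
qed simp

lemma scalar_prod_self_nonneg: "0 \<le> v \<bullet> (v :: 'a::linordered_idom vec)"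
  by (simp add: scalar_prod_def sum_nonneg)

lemma scalar_prod_self_pos:
  assumes "v \<in> carrier_vec n" "v \<noteq> 0\<^sub>v n"
  shows "0 < v \<bullet> (v :: 'a::linordered_idom vec)"
proof -
  obtain i where "i < n" "v $ i \<noteq> 0" using assms by (metis carrier_vecD eq_vecI index_zero_vec)
  then have "0 < (\<Sum>j\<in>{0..<n}. v $ j * v $ j)"
    by (intro sum_pos2[of _ i]) (auto simp: zero_less_mult_iff neq_iff)
  then show ?thesis using assms(1) by (simp add: scalar_prod_def)
qed

definition list_mat :: "'b list \<Rightarrow> 'c list \<Rightarrow> ('b \<Rightarrow> 'c \<Rightarrow> 'a) \<Rightarrow> 'a mat" where
  "list_mat xs ys f = mat (length xs) (length ys) (\<lambda>(i, k). f (xs ! i) (ys ! k))"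

lemma list_mat_carrier [simp]: "list_mat xs ys f \<in> carrier_mat (length xs) (length ys)"
  and list_mat_dims [simp]: "dim_row (list_mat xs ys f) = length xs" "dim_col (list_mat xs ys f) = length ys"
  and list_mat_index [simp]:
    "i < length xs \<Longrightarrow> k < length ys \<Longrightarrow> list_mat xs ys f $$ (i, k) = f (xs ! i) (ys ! k)"
  by (auto simp: list_mat_def)

lemma list_mat_cong:
  assumes "\<And>x y. x \<in> set xs \<Longrightarrow> y \<in> set ys \<Longrightarrow> f x y = g x y"
  shows "list_mat xs ys f = list_mat xs ys g"
  using assms by (intro eq_matI) auto

lemma transpose_list_mat: "transpose_mat (list_mat xs ys f) = list_mat ys xs (\<lambda>y x. f x y)"
  by (intro eq_matI) auto

lemma sum_nth_distinct:
  assumes "distinct ys"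
  shows "(\<Sum>j<length ys. g (ys ! j)) = (\<Sum>y\<in>set ys. g y)"
  using sum.reindex_bij_betw[OF bij_betw_nth[OF assms refl refl], of g] by (simp add: lessThan_atLeast0)

lemma list_mat_mult:
  fixes f g :: "'b \<Rightarrow> 'b \<Rightarrow> 'a::comm_semiring_0"
  assumes "distinct ys"
  shows "list_mat xs ys f * list_mat ys zs g = list_mat xs zs (\<lambda>x z. \<Sum>y\<in>set ys. f x y * g y z)"
proof (rule eq_matI)
  fix i k assume "i < dim_row (list_mat xs zs (\<lambda>x z. \<Sum>y\<in>set ys. f x y * g y z))"
    and "k < dim_col (list_mat xs zs (\<lambda>x z. \<Sum>y\<in>set ys. f x y * g y z))"
  then show "(list_mat xs ys f * list_mat ys zs g) $$ (i, k) =
      list_mat xs zs (\<lambda>x z. \<Sum>y\<in>set ys. f x y * g y z) $$ (i, k)"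
    using sum_nth_distinct[OF assms, of "\<lambda>y. f (xs ! i) y * g y (zs ! k)"]
    by (simp add: scalar_prod_def atLeast0LessThan)
qed auto

lemma list_mat_mult_vec:
  fixes f :: "'b \<Rightarrow> 'c \<Rightarrow> 'a::comm_semiring_0"
  assumes "distinct ys"
  shows "list_mat xs ys f *\<^sub>v vec (length ys) (\<lambda>k. g (ys ! k)) =
    vec (length xs) (\<lambda>i. \<Sum>y\<in>set ys. f (xs ! i) y * g y)"
proof (rule eq_vecI)
  fix i assume "i < dim_vec (vec (length xs) (\<lambda>i. \<Sum>y\<in>set ys. f (xs ! i) y * g y))"
  then show "(list_mat xs ys f *\<^sub>v vec (length ys) (\<lambda>k. g (ys ! k))) $ i =
      vec (length xs) (\<lambda>i. \<Sum>y\<in>set ys. f (xs ! i) y * g y) $ i"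
    using sum_nth_distinct[OF assms, of "\<lambda>y. f (xs ! i) y * g y"]
    by (simp add: list_mat_def scalar_prod_def lessThan_atLeast0)
qed simp

lemma sum_of_bool_eq_delta:
  fixes f :: "'b \<Rightarrow> 'a::comm_semiring_1"
  assumes "finite A" "x \<in> A"
  shows "(\<Sum>y\<in>A. of_bool (x = y) * f y) = f x" and "(\<Sum>y\<in>A. f y * of_bool (y = x)) = f x"
  using assms by (simp_all add: of_bool_def if_distrib[of "\<lambda>u. u * _"] if_distrib[of "\<lambda>u. _ * u"]
      sum.delta sum.delta' cong: if_cong)

lemma list_mat_delta:
  assumes "distinct xs"
  shows "list_mat xs xs (\<lambda>x y. of_bool (x = y)) = 1\<^sub>m (length xs)"
  using assms by (intro eq_matI) (auto simp: nth_eq_iff_index_eq)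

(* face_list enumerates the faces in an order chosen by SOME; this similarity makes
   characteristic polynomials independent of that order. *)
lemma list_mat_reindex_similar:
  fixes f :: "'b \<Rightarrow> 'b \<Rightarrow> 'a::comm_ring_1"
  assumes xs: "distinct xs" and ys: "distinct ys" and set_eq: "set xs = set ys"
  shows "similar_mat (list_mat xs xs f) (list_mat ys ys f)"
proof -
  let ?P = "list_mat xs ys (\<lambda>x y. of_bool (x = y) :: 'a)"
  let ?Q = "list_mat ys xs (\<lambda>x y. of_bool (x = y) :: 'a)"
  have len: "length ys = length xs"
    using distinct_card[OF xs] distinct_card[OF ys] set_eq by simp
  have "?P * ?Q = list_mat xs xs (\<lambda>x y. of_bool (x = y))"
    unfolding list_mat_mult[OF ys] using set_eq by (intro list_mat_cong) (simp add: sum_of_bool_eq_delta)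
  also have "\<dots> = 1\<^sub>m (length xs)" by (rule list_mat_delta[OF xs])
  finally have PQ: "?P * ?Q = 1\<^sub>m (length xs)" .
  have "?Q * ?P = list_mat ys ys (\<lambda>x y. of_bool (x = y))"
    unfolding list_mat_mult[OF xs] using set_eq by (intro list_mat_cong) (simp add: sum_of_bool_eq_delta)
  also have "\<dots> = 1\<^sub>m (length xs)" using list_mat_delta[OF ys] len by simp
  finally have QP: "?Q * ?P = 1\<^sub>m (length xs)" .
  have "?P * list_mat ys ys f * ?Q = list_mat xs xs f"
    unfolding list_mat_mult[OF ys] list_mat_mult[OF xs] using set_eq
    by (intro list_mat_cong) (simp add: sum_of_bool_eq_delta)
  then show ?thesis
    unfolding similar_mat_def similar_mat_wit_def using PQ QP len
    by (intro exI[of _ ?P] exI[of _ ?Q]) (auto simp: Let_def)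
qed

lemma list_mat_append_block_diag:
  assumes "\<And>x y. x \<in> set xs \<Longrightarrow> y \<in> set ys \<Longrightarrow> f x y = 0 \<and> f y x = 0"
  shows "list_mat (xs @ ys) (xs @ ys) f =
    four_block_mat (list_mat xs xs f) (0\<^sub>m (length xs) (length ys)) (0\<^sub>m (length ys) (length xs)) (list_mat ys ys f)"
  using assms by (intro eq_matI) (auto simp: nth_append)

lemma finite_faces: "finite K \<Longrightarrow> finite (faces j K)"
  unfolding faces_def by simp

lemma face_nonempty: "F \<in> faces j K \<Longrightarrow> F \<noteq> {}"
  unfolding faces_def by auto

lemma faces_subset: "faces j K \<subseteq> K"
  unfolding faces_def by auto

lemma face_list:
  assumes "finite K"
  shows distinct_face_list: "distinct (face_list j K)" and set_face_list: "set (face_list j K) = faces j K"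
proof -
  have "\<exists>xs. distinct xs \<and> set xs = faces j K"
    using finite_distinct_list[OF finite_faces[OF assms]] by metis
  from someI_ex[OF this] show "distinct (face_list j K)" "set (face_list j K) = faces j K"
    unfolding face_list_def by auto
qed

lemma length_face_list: "finite K \<Longrightarrow> length (face_list j K) = card (faces j K)"
  using distinct_face_list set_face_list distinct_card by metis

lemma face_list_nth: "finite K \<Longrightarrow> i < card (faces j K) \<Longrightarrow> face_list j K ! i \<in> faces j K"
  using set_face_list length_face_list nth_mem by metis

lemma cob_mat_eq_list_mat:
  "cob_mat K j = list_mat (face_list (j + 1) K) (face_list j K) (\<lambda>Fb G. cob K j (ind_face G) Fb)"
  unfolding cob_mat_def list_mat_def Let_def ..

lemma up_lap_mat_eq_list_mat:
  "up_lap_mat K w n = list_mat (face_list n K) (face_list n K) (\<lambda>F G. up_lap K w n (ind_face G) F)"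
  unfolding up_lap_mat_def list_mat_def Let_def ..

lemma cob_mat_carrier:
  assumes "finite K"
  shows "cob_mat K j \<in> carrier_mat (card (faces (j + 1) K)) (card (faces j K))"
  unfolding cob_mat_eq_list_mat carrier_mat_def by (simp add: length_face_list[OF assms])

definition incidence :: "'a::linorder set \<Rightarrow> 'a set \<Rightarrow> real" where
  "incidence F G = (if F \<subseteq> G then sgn_face F G else 0)"

lemma sgn_face_square [simp]: "sgn_face F G * sgn_face F G = 1"
  unfolding sgn_face_def by (simp flip: power_add)

lemma incidence_square: "incidence F G * incidence F G = of_bool (F \<subseteq> G)"
  unfolding incidence_def by simp

lemma incidence_mult:
  "incidence G T * incidence G' T = (if G \<union> G' \<subseteq> T then sgn_face G T * sgn_face G' T else 0)"
  "incidence t G * incidence t G' = (if t \<subseteq> G \<inter> G' then sgn_face t G * sgn_face t G' else 0)"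
  unfolding incidence_def by auto

lemma cob_ind_face:
  assumes "finite K"
  shows "cob K j (ind_face G) Fb = (if G \<in> faces j K then incidence G Fb else 0)"
proof -
  have "cob K j (ind_face G) Fb = (\<Sum>G'\<in>{G' \<in> faces j K. G' \<subseteq> Fb}. if G' = G then sgn_face G' Fb else 0)"
    unfolding cob_def ind_face_def by (intro sum.cong) auto
  then show ?thesis using finite_faces[OF assms, of j] by (simp add: sum.delta' incidence_def)
qed

lemma cob_eq_sum_incidence:
  assumes "finite (faces j K)"
  shows "cob K j \<phi> Fb = (\<Sum>G\<in>faces j K. incidence G Fb * \<phi> G)"
  unfolding cob_def incidence_def using assms by (simp add: sum.inter_filter if_distrib[of "\<lambda>u. u * _"] cong: if_cong)

lemma cob_expand_ind_face:
  assumes "finite K"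
  shows "cob K j \<phi> Fb = (\<Sum>G\<in>faces j K. cob K j (ind_face G) Fb * \<phi> G)"
proof -
  have "cob K j \<phi> Fb = (\<Sum>G\<in>faces j K. incidence G Fb * \<phi> G)"
    by (rule cob_eq_sum_incidence[OF finite_faces[OF assms]])
  also have "\<dots> = (\<Sum>G\<in>faces j K. cob K j (ind_face G) Fb * \<phi> G)"
    by (intro sum.cong) (simp_all add: cob_ind_face[OF assms])
  finally show ?thesis .
qed

lemma up_lap_ind_face_outside:
  assumes "G \<notin> faces n K"
  shows "up_lap K w n (ind_face G) F = 0"
proof -
  have "cob K n (ind_face G) = (\<lambda>_. 0)"
    using assms by (intro ext) (auto simp: cob_def ind_face_def intro!: sum.neutral)
  then show ?thesis by (simp add: up_lap_def cob_adj_def)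
qed

lemma up_lap_unit_weight_ind_face:
  assumes "finite K" and "F \<in> faces n K"
  shows "up_lap K (\<lambda>_. 1) n (ind_face G) F =
    (\<Sum>Fb\<in>faces (n + 1) K. cob K n (ind_face F) Fb * cob K n (ind_face G) Fb)"
proof -
  have "up_lap K (\<lambda>_. 1) n (ind_face G) F =
      (\<Sum>Fb\<in>faces (n + 1) K. if F \<subseteq> Fb then sgn_face F Fb * cob K n (ind_face G) Fb else 0)"
    using finite_faces[OF assms(1)] by (simp add: up_lap_def cob_adj_def sum.inter_filter)
  also have "\<dots> = (\<Sum>Fb\<in>faces (n + 1) K. cob K n (ind_face F) Fb * cob K n (ind_face G) Fb)"
    using assms by (intro sum.cong) (simp_all add: cob_ind_face incidence_def)
  finally show ?thesis .
qed

lemma up_lap_mat_unit_weight: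
  assumes "finite K"
  shows "up_lap_mat K (\<lambda>_. 1) n = transpose_mat (cob_mat K n) * cob_mat K n"
  unfolding up_lap_mat_eq_list_mat cob_mat_eq_list_mat transpose_list_mat
    list_mat_mult[OF distinct_face_list[OF assms]]
  using set_face_list[OF assms] up_lap_unit_weight_ind_face[OF assms] by (intro list_mat_cong) simp

lemma up_lap_subcomplex:
  assumes S: "is_complex S" "S \<subseteq> K"
    and cofaces: "\<And>Fb. Fb \<in> faces (n + 1) K \<Longrightarrow> F \<subseteq> Fb \<Longrightarrow> Fb \<in> S"
  shows "up_lap K w n \<phi> F = up_lap S w n \<phi> F"
proof -
  have faces_sub: "{G \<in> faces n K. G \<subseteq> Fb} = {G \<in> faces n S. G \<subseteq> Fb}" if "Fb \<in> S" for Fb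
  proof -
    have "G \<in> S" if "G \<in> faces n K" "G \<subseteq> Fb" for G
      using S(1) \<open>Fb \<in> S\<close> face_nonempty[OF that(1)] that(2) unfolding is_complex_def by blast
    then show ?thesis using S(2) unfolding faces_def by blast
  qed
  have "{Fb \<in> faces (n + 1) K. F \<subseteq> Fb} = {Fb \<in> faces (n + 1) S. F \<subseteq> Fb}"
    using S(2) cofaces unfolding faces_def by blast
  moreover have "cob K n \<phi> Fb = cob S n \<phi> Fb" if "Fb \<in> faces (n + 1) S" for Fb
    using faces_sub[of Fb] that unfolding cob_def faces_def by simp
  ultimately show ?thesis
    unfolding up_lap_def cob_adj_def by (auto intro!: sum.cong)
qed

lemma up_lap_weight_cong:
  assumes "F \<in> K" and "\<And>F. F \<in> K \<Longrightarrow> w F = w' F"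
  shows "up_lap K w n \<phi> F = up_lap K w' n \<phi> F"
  using assms unfolding up_lap_def cob_adj_def faces_def by (auto intro!: sum.cong)

section \<open>The spectrum of a unit-weight up-Laplacian lies in [0, |V|]\<close>

lemma card_less_insert:
  fixes x y :: "'a::linorder"
  assumes "finite S" "x \<notin> S"
  shows "card {v \<in> insert x S. v < y} = (if x < y then Suc (card {v \<in> S. v < y}) else card {v \<in> S. v < y})"
proof -
  have "{v \<in> insert x S. v < y} = (if x < y then insert x {v \<in> S. v < y} else {v \<in> S. v < y})"
    by auto
  then show ?thesis using assms by simp
qed

lemma sgn_face_union_inter:
  fixes G G' :: "'a::linorder set"
  assumes fin: "finite G" "finite G'" and card_eq: "card G = card G'"
    and card_union: "card (G \<union> G') = Suc (card G)"
  shows "sgn_face G (G \<union> G') * sgn_face G' (G \<union> G') + sgn_face (G \<inter> G') G * sgn_face (G \<inter> G') G' = 0"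
proof -
  have "card (G \<union> G' - G) = 1" "card (G \<union> G' - G') = 1"
    using card_union card_eq fin by (simp_all add: card_Diff_subset)
  then obtain a b where a: "G \<union> G' - G' = {a}" and b: "G \<union> G' - G = {b}"
    by (metis card_1_singletonE)
  then have ab: "a \<in> G" "a \<notin> G'" "b \<in> G'" "b \<notin> G" "a \<noteq> b" by auto
  have "G - G \<inter> G' = {a}" "G' - G \<inter> G' = {b}" "G \<union> G' = insert a G'" "G \<union> G' = insert b G"
    using a b by auto
  then have "sgn_face G (G \<union> G') = (-1) ^ card {v \<in> insert a G'. v < b}"
    and "sgn_face G' (G \<union> G') = (-1) ^ card {v \<in> insert b G. v < a}"
    and "sgn_face (G \<inter> G') G = (-1) ^ card {v \<in> G. v < a}"
    and "sgn_face (G \<inter> G') G' = (-1) ^ card {v \<in> G'. v < b}"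
    unfolding sgn_face_def using a b by (simp_all only: the_elem_eq)
  then show ?thesis
    using card_less_insert[OF fin(2) ab(2), of b] card_less_insert[OF fin(1) ab(4), of a] ab(5)
    by (cases "a < b") auto
qed

lemma sum_over_supersets:
  assumes "finite V" "U \<subseteq> V" "m \<le> card U"
  shows "(\<Sum>T\<in>{T \<in> Pow V. card T = m}. if U \<subseteq> T then f T else 0) = (if card U = m then f U else 0)"
proof -
  have "U \<subseteq> T \<and> T \<in> {T \<in> Pow V. card T = m} \<longleftrightarrow> T = U \<and> card U = m" for T
    using assms card_seteq[of T U] finite_subset[of T V] by auto
  then have "(\<Sum>T\<in>{T \<in> Pow V. card T = m}. if U \<subseteq> T then f T else 0) =
      (\<Sum>T\<in>{T \<in> Pow V. card T = m}. if T = U \<and> card U = m then f U else 0)"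
    by (intro sum.cong) auto
  then show ?thesis using assms by (simp add: sum.delta')
qed

lemma sum_over_subsets:
  assumes "finite V" "I \<subseteq> V" "card I \<le> m"
  shows "(\<Sum>t\<in>{t \<in> Pow V. card t = m}. if t \<subseteq> I then f t else 0) = (if card I = m then f I else 0)"
proof -
  have "t \<subseteq> I \<and> t \<in> {t \<in> Pow V. card t = m} \<longleftrightarrow> t = I \<and> card I = m" for t
    using assms card_seteq[of I t] finite_subset[of I V] by auto
  then have "(\<Sum>t\<in>{t \<in> Pow V. card t = m}. if t \<subseteq> I then f t else 0) =
      (\<Sum>t\<in>{t \<in> Pow V. card t = m}. if t = I \<and> card I = m then f I else 0)"
    by (intro sum.cong) auto
  then show ?thesis using assms by (simp add: sum.delta')
qed

lemma card_cofaces_in_simplex: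
  assumes "finite V" "G \<subseteq> V"
  shows "card {T \<in> Pow V. card T = Suc (card G) \<and> G \<subseteq> T} = card V - card G"
proof -
  have fin: "finite G" using assms finite_subset by blast
  have "{T \<in> Pow V. card T = Suc (card G) \<and> G \<subseteq> T} = (\<lambda>x. insert x G) ` (V - G)"
  proof (intro equalityI subsetI)
    fix T assume T: "T \<in> {T \<in> Pow V. card T = Suc (card G) \<and> G \<subseteq> T}"
    then have "card (T - G) = 1"
      using fin assms(1) finite_subset by (auto simp: card_Diff_subset)
    then obtain x where "T - G = {x}" by (rule card_1_singletonE)
    then show "T \<in> (\<lambda>x. insert x G) ` (V - G)" using T by blast
  qed (use assms fin in auto)
  moreover have "inj_on (\<lambda>x. insert x G) (V - G)"
    by (auto simp: inj_on_def)
  ultimately show ?thesis using assms fin by (simp add: card_image card_Diff_subset)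
qed

lemma card_facets_in_simplex:
  assumes "finite G" "G \<subseteq> V" "card G = Suc n"
  shows "card {t \<in> Pow V. card t = n \<and> t \<subseteq> G} = Suc n"
proof -
  have "{t \<in> Pow V. card t = n \<and> t \<subseteq> G} = {t. t \<subseteq> G \<and> card t = n}"
    using assms(2) by auto
  then show ?thesis using n_subsets[OF assms(1), of n] assms(3) by simp
qed

lemma simplex_incidence_diag:
  assumes V: "finite V" and G: "G \<subseteq> V" "card G = Suc n"
  shows "(\<Sum>T\<in>{T \<in> Pow V. card T = Suc (Suc n)}. incidence G T * incidence G T)
    + (\<Sum>t\<in>{t \<in> Pow V. card t = n}. incidence t G * incidence t G) = real (card V)"
proof -
  have fin: "finite G" using V G finite_subset by blast
  have "card G \<le> card V" using V G card_mono by blast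
  moreover have "{T \<in> Pow V. card T = Suc (Suc n)} \<inter> {T. G \<subseteq> T} =
      {T \<in> Pow V. card T = Suc (card G) \<and> G \<subseteq> T}"
    using G(2) by auto
  then have "(\<Sum>T\<in>{T \<in> Pow V. card T = Suc (Suc n)}. incidence G T * incidence G T) = card V - card G"
    using card_cofaces_in_simplex[OF V G(1)] V by (simp add: incidence_square sum_of_bool_eq)
  moreover have "{t \<in> Pow V. card t = n} \<inter> {t. t \<subseteq> G} = {t \<in> Pow V. card t = n \<and> t \<subseteq> G}"
    by auto
  then have "(\<Sum>t\<in>{t \<in> Pow V. card t = n}. incidence t G * incidence t G) = Suc n"
    using card_facets_in_simplex[OF fin G] V by (simp add: incidence_square sum_of_bool_eq)
  ultimately show ?thesis using G(2) by (simp add: of_nat_diff)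
qed

lemma simplex_incidence_off_diag:
  assumes V: "finite V" and G: "G \<subseteq> V" "card G = Suc n" and G': "G' \<subseteq> V" "card G' = Suc n"
    and "G \<noteq> G'"
  shows "(\<Sum>T\<in>{T \<in> Pow V. card T = Suc (Suc n)}. incidence G T * incidence G' T)
    + (\<Sum>t\<in>{t \<in> Pow V. card t = n}. incidence t G * incidence t G') = 0"
proof -
  have fin: "finite G" "finite G'" using V G G' finite_subset by auto
  have card_sum: "card (G \<union> G') + card (G \<inter> G') = 2 * Suc n"
    using card_Un_Int[OF fin] G G' by simp
  have "G \<subset> G \<union> G'"
    using \<open>G \<noteq> G'\<close> card_subset_eq[OF fin(1), of G'] G G' by auto
  then have card_union: "Suc n < card (G \<union> G')" using fin G by (metis psubset_card_mono finite_UnI)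
  have up: "(\<Sum>T\<in>{T \<in> Pow V. card T = Suc (Suc n)}. incidence G T * incidence G' T) =
      (if card (G \<union> G') = Suc (Suc n) then sgn_face G (G \<union> G') * sgn_face G' (G \<union> G') else 0)"
    unfolding incidence_mult by (rule sum_over_supersets[OF V]) (use G G' card_union in auto)
  have "(\<Sum>t\<in>{t \<in> Pow V. card t = n}. incidence t G * incidence t G') =
      (if card (G \<inter> G') = n then sgn_face (G \<inter> G') G * sgn_face (G \<inter> G') G' else 0)"
    unfolding incidence_mult by (rule sum_over_subsets[OF V]) (use G G' card_sum card_union in auto)
  then show ?thesis
    using up card_sum sgn_face_union_inter[OF fin] G G' by auto
qed

lemma sum_square_linear_forms:
  fixes c :: "'b \<Rightarrow> 'c \<Rightarrow> real"
  shows "(\<Sum>T\<in>A. (\<Sum>G\<in>B. c T G * \<phi> G)\<^sup>2) = (\<Sum>G\<in>B. \<Sum>G'\<in>B. \<phi> G * \<phi> G' * (\<Sum>T\<in>A. c T G * c T G'))"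
proof -
  have "(\<Sum>T\<in>A. (\<Sum>G\<in>B. c T G * \<phi> G)\<^sup>2) = (\<Sum>T\<in>A. \<Sum>G\<in>B. \<Sum>G'\<in>B. (c T G * \<phi> G) * (c T G' * \<phi> G'))"
    by (simp add: power2_eq_square sum_product)
  also have "\<dots> = (\<Sum>G\<in>B. \<Sum>G'\<in>B. \<Sum>T\<in>A. (c T G * \<phi> G) * (c T G' * \<phi> G'))"
    by (subst sum.swap) (simp add: sum.swap[of _ A])
  also have "\<dots> = (\<Sum>G\<in>B. \<Sum>G'\<in>B. \<phi> G * \<phi> G' * (\<Sum>T\<in>A. c T G * c T G'))"
    by (simp add: sum_distrib_left mult_ac)
  finally show ?thesis .
qed

(* Up- plus down-Laplacian of the full simplex on V is |V| times the identity. The down part runs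
   over all n-element subsets, so for n = 0 it includes the empty face (augmented complex). *)
lemma simplex_up_down_identity:
  fixes V :: "'a::linorder set" and n :: nat
  assumes V: "finite V"
  defines "B \<equiv> {G \<in> Pow V. card G = Suc n}"
  shows "(\<Sum>T\<in>{T \<in> Pow V. card T = Suc (Suc n)}. (\<Sum>G\<in>B. incidence G T * \<phi> G)\<^sup>2)
    + (\<Sum>t\<in>{t \<in> Pow V. card t = n}. (\<Sum>G\<in>B. incidence t G * \<phi> G)\<^sup>2)
    = real (card V) * (\<Sum>G\<in>B. (\<phi> G)\<^sup>2)"
proof -
  have coeff: "(\<Sum>T\<in>{T \<in> Pow V. card T = Suc (Suc n)}. incidence G T * incidence G' T)
      + (\<Sum>t\<in>{t \<in> Pow V. card t = n}. incidence t G * incidence t G') = (if G' = G then real (card V) else 0)"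
    if "G \<in> B" "G' \<in> B" for G G'
    using that simplex_incidence_diag[OF V] simplex_incidence_off_diag[OF V] unfolding B_def by auto
  have "(\<Sum>T\<in>{T \<in> Pow V. card T = Suc (Suc n)}. (\<Sum>G\<in>B. incidence G T * \<phi> G)\<^sup>2)
    + (\<Sum>t\<in>{t \<in> Pow V. card t = n}. (\<Sum>G\<in>B. incidence t G * \<phi> G)\<^sup>2)
    = (\<Sum>G\<in>B. \<Sum>G'\<in>B. \<phi> G * \<phi> G' * (if G' = G then real (card V) else 0))"
    unfolding sum_square_linear_forms sum.distrib[symmetric] distrib_left[symmetric]
    by (intro sum.cong refl) (simp only: coeff)
  also have "\<dots> = real (card V) * (\<Sum>G\<in>B. (\<phi> G)\<^sup>2)"
    using V unfolding B_def
    by (simp add: if_distrib[of "\<lambda>u. _ * u"] sum.delta' sum_distrib_left power2_eq_square mult_ac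
        cong: if_cong)
  finally show ?thesis .
qed

lemma sum_square_cob_le:
  assumes K: "K \<subseteq> Pow V" and V: "finite V"
  shows "(\<Sum>Fb\<in>faces (n + 1) K. (cob K n \<phi> Fb)\<^sup>2) \<le> real (card V) * (\<Sum>G\<in>faces n K. (\<phi> G)\<^sup>2)"
proof -
  let ?B = "{G \<in> Pow V. card G = Suc n}"
  let ?T = "{T \<in> Pow V. card T = Suc (Suc n)}"
  define \<psi> where "\<psi> G = (if G \<in> faces n K then \<phi> G else 0)" for G
  have fin: "finite K" using K V finite_subset by (metis finite_Pow_iff)
  have B: "faces n K \<subseteq> ?B" and T: "faces (n + 1) K \<subseteq> ?T"
    using K unfolding faces_def by auto
  have cob_eq: "cob K n \<phi> Fb = (\<Sum>G\<in>?B. incidence G Fb * \<psi> G)" for Fb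
    unfolding cob_eq_sum_incidence[OF finite_faces[OF fin]] \<psi>_def
    by (rule sum.mono_neutral_cong_left) (use B V in auto)
  have "(\<Sum>Fb\<in>faces (n + 1) K. (cob K n \<phi> Fb)\<^sup>2) \<le> (\<Sum>T\<in>?T. (\<Sum>G\<in>?B. incidence G T * \<psi> G)\<^sup>2)"
    unfolding cob_eq by (rule sum_mono2) (use T V in auto)
  also have "\<dots> \<le> real (card V) * (\<Sum>G\<in>?B. (\<psi> G)\<^sup>2)"
  proof -
    have "0 \<le> (\<Sum>t\<in>{t \<in> Pow V. card t = n}. (\<Sum>G\<in>?B. incidence t G * \<psi> G)\<^sup>2)"
      by (rule sum_nonneg) simp
    then show ?thesis using simplex_up_down_identity[OF V, where n = n and \<phi> = \<psi>] by linarith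
  qed
  also have "(\<Sum>G\<in>?B. (\<psi> G)\<^sup>2) = (\<Sum>G\<in>faces n K. (\<phi> G)\<^sup>2)"
    unfolding \<psi>_def by (rule sum.mono_neutral_cong_right) (use B V in auto)
  finally show ?thesis .
qed

lemma cob_mat_norm_le:
  fixes K :: "'a::linorder set set"
  assumes K: "K \<subseteq> Pow V" and V: "finite V" and v: "v \<in> carrier_vec (card (faces n K))"
  shows "(cob_mat K n *\<^sub>v v) \<bullet> (cob_mat K n *\<^sub>v v) \<le> real (card V) * (v \<bullet> v)"
proof -
  have fin: "finite K" using K V finite_subset by (metis finite_Pow_iff)
  let ?fl = "face_list n K" and ?gl = "face_list (n + 1) K"
  let ?N = "card (faces n K)"
  have len: "length ?fl = ?N" "length ?gl = card (faces (n + 1) K)"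
    by (simp_all add: length_face_list[OF fin])
  have bij: "bij_betw ((!) ?fl) {..<?N} (faces n K)"
    using bij_betw_nth[OF distinct_face_list[OF fin, of n] refl set_face_list[OF fin, of n, symmetric]] len(1) by simp
  define \<phi> where "\<phi> = (\<lambda>G. v $ the_inv_into {..<?N} ((!) ?fl) G)"
  have \<phi>_nth: "\<phi> (?fl ! k) = v $ k" if "k < ?N" for k
    unfolding \<phi>_def using that bij by (simp add: bij_betw_def the_inv_into_f_f)
  have "v \<bullet> v = (\<Sum>k<?N. (\<phi> (?fl ! k))\<^sup>2)"
    using v \<phi>_nth by (simp add: scalar_prod_def power2_eq_square lessThan_atLeast0)
  also have "\<dots> = (\<Sum>G\<in>faces n K. (\<phi> G)\<^sup>2)"
    using sum_nth_distinct[OF distinct_face_list[OF fin, of n], of "\<lambda>G. (\<phi> G)\<^sup>2"] set_face_list[OF fin, of n] len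
    by simp
  finally have vv: "v \<bullet> v = (\<Sum>G\<in>faces n K. (\<phi> G)\<^sup>2)" .
  have v_vec: "v = vec (length ?fl) (\<lambda>k. \<phi> (?fl ! k))"
    using v \<phi>_nth len by (intro eq_vecI) auto
  have Dv: "cob_mat K n *\<^sub>v v = vec (length ?gl) (\<lambda>i. cob K n \<phi> (?gl ! i))"
    unfolding v_vec cob_mat_eq_list_mat list_mat_mult_vec[OF distinct_face_list[OF fin]] set_face_list[OF fin]
    by (simp add: cob_expand_ind_face[OF fin, symmetric])
  have "(cob_mat K n *\<^sub>v v) \<bullet> (cob_mat K n *\<^sub>v v) = (\<Sum>i<length ?gl. (cob K n \<phi> (?gl ! i))\<^sup>2)"
    using Dv by (simp add: cob_mat_eq_list_mat scalar_prod_def power2_eq_square lessThan_atLeast0)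
  also have "\<dots> = (\<Sum>Fb\<in>faces (n + 1) K. (cob K n \<phi> Fb)\<^sup>2)"
    using sum_nth_distinct[OF distinct_face_list[OF fin, of "n + 1"], of "\<lambda>Fb. (cob K n \<phi> Fb)\<^sup>2"]
      set_face_list[OF fin, of "n + 1"]
    by simp
  also have "\<dots> \<le> real (card V) * (v \<bullet> v)"
    unfolding vv by (rule sum_square_cob_le[OF K V])
  finally show ?thesis .
qed

lemma up_lap_eigenvalue_bounds:
  fixes K :: "'a::linorder set set"
  assumes K: "K \<subseteq> Pow V" and V: "finite V"
    and root: "poly (char_poly (up_lap_mat K (\<lambda>_. 1) n)) x = 0"
  shows "0 \<le> x \<and> x \<le> real (card V)"
proof -
  have fin: "finite K" using K V finite_subset by (metis finite_Pow_iff)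
  let ?D = "cob_mat K n" and ?N = "card (faces n K)"
  have D: "?D \<in> carrier_mat (card (faces (n + 1) K)) ?N" by (rule cob_mat_carrier[OF fin])
  have DtD: "transpose_mat ?D * ?D \<in> carrier_mat ?N ?N" using D by simp
  have "eigenvalue (transpose_mat ?D * ?D) x"
    unfolding eigenvalue_root_char_poly[OF DtD] using root unfolding up_lap_mat_unit_weight[OF fin] .
  then obtain v where v: "v \<in> carrier_vec ?N" "v \<noteq> 0\<^sub>v ?N" "(transpose_mat ?D * ?D) *\<^sub>v v = x \<cdot>\<^sub>v v"
    using D unfolding eigenvalue_def eigenvector_def by auto
  have "x * (v \<bullet> v) = (x \<cdot>\<^sub>v v) \<bullet> v"
    using v(1) by simp
  also have "\<dots> = (transpose_mat ?D *\<^sub>v (?D *\<^sub>v v)) \<bullet> v"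
    unfolding v(3)[symmetric] using D v(1) by (simp only: assoc_mult_mat_vec transpose_carrier_mat)
  also have "\<dots> = (?D *\<^sub>v v) \<bullet> (?D *\<^sub>v v)"
    by (rule transpose_vec_mult_scalar[OF D v(1) mult_mat_vec_carrier[OF D v(1)]])
  finally have eq: "x * (v \<bullet> v) = (?D *\<^sub>v v) \<bullet> (?D *\<^sub>v v)" .
  have pos: "0 < v \<bullet> v" by (rule scalar_prod_self_pos[OF v(1,2)])
  have "0 \<le> x * (v \<bullet> v)"
    unfolding eq by (rule scalar_prod_self_nonneg)
  then have "0 \<le> x" using pos by (metis not_le mult_neg_pos)
  moreover have "x * (v \<bullet> v) \<le> real (card V) * (v \<bullet> v)"
    unfolding eq by (rule cob_mat_norm_le[OF K V v(1)])
  then have "x \<le> real (card V)" by (rule mult_right_le_imp_le[OF _ pos])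
  ultimately show ?thesis ..
qed

lemma spectrum_in_range:
  fixes lam :: "nat \<Rightarrow> real"
  assumes K: "K \<subseteq> Pow V" "finite V"
    and lam: "char_poly (up_lap_mat K (\<lambda>_. 1) n) = (\<Prod>k=1..N. [:- lam k, 1:])"
    and x: "x \<in># image_mset lam (mset_set {1..N})"
  shows "0 \<le> x \<and> x \<le> real (card V)"
proof -
  obtain k where k: "k \<in> {1..N}" "x = lam k" using x by auto
  have "poly (char_poly (up_lap_mat K (\<lambda>_. 1) n)) (lam k) = 0"
    unfolding lam poly_prod by (rule prod_zero) (use k in auto)
  then show ?thesis unfolding k(2) by (rule up_lap_eigenvalue_bounds[OF K])
qed

section \<open>Zero eigenvalues of the up-Laplacian of an (n+1)-dimensional complex\<close>

lemma card_faces_minus_rank_le_order_zero: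
  fixes H :: "'a::linorder set set"
  assumes H: "finite H"
    and split: "char_poly (up_lap_mat H (\<lambda>_. 1) n) = (\<Prod>a\<leftarrow>as. [:- a, 1:])"
  shows "card (faces n H) - vec_space.rank (dim_row (cob_mat H n)) (cob_mat H n)
    \<le> Polynomial.order 0 (char_poly (up_lap_mat H (\<lambda>_. 1) n))"
proof -
  let ?D = "cob_mat H n"
  have D: "?D \<in> carrier_mat (card (faces (n + 1) H)) (card (faces n H))"
    by (rule cob_mat_carrier[OF H])
  have L: "up_lap_mat H (\<lambda>_. 1) n \<in> carrier_mat (card (faces n H)) (card (faces n H))"
    unfolding up_lap_mat_unit_weight[OF H] using D by simp
  have "card (faces n H) - vec_space.rank (dim_row ?D) ?D = kernel_dim ?D"
    using rank_plus_kernel_dim[OF D] D by simp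
  also have "\<dots> \<le> kernel_dim (up_lap_mat H (\<lambda>_. 1) n)"
    unfolding up_lap_mat_unit_weight[OF H] by (rule kernel_dim_le_mult_left[OF D transpose_carrier_mat[THEN iffD2, OF D]])
  also have "\<dots> = kernel_dim (char_matrix (up_lap_mat H (\<lambda>_. 1) n) 0)"
    by (simp add: char_matrix_zero[OF L])
  also have "\<dots> \<le> Polynomial.order 0 (char_poly (up_lap_mat H (\<lambda>_. 1) n))"
    by (rule kernel_dim_le_order[OF L split])
  finally show ?thesis .
qed

lemma top_cohom_codim_eq_rank:
  fixes H :: "'a::linorder set set"
  assumes H: "finite H" and top: "faces (n + 2) H = {}"
  shows "card (faces (n + 1) H) - cohom_dim_succ H n = vec_space.rank (dim_row (cob_mat H n)) (cob_mat H n)"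
proof -
  have "cob_mat H (n + 1) \<in> carrier_mat 0 (card (faces (n + 1) H))"
    using cob_mat_carrier[OF H, of "n + 1"] top by (simp add: numeral_2_eq_2)
  then have "kernel_dim (cob_mat H (n + 1)) = card (faces (n + 1) H)"
    by (rule kernel_dim_no_rows)
  moreover have "vec_space.rank (dim_row (cob_mat H n)) (cob_mat H n) \<le> card (faces (n + 1) H)"
    using rank_le_dim_row[OF cob_mat_carrier[OF H]] cob_mat_carrier[OF H, of n] by simp
  ultimately show ?thesis unfolding cohom_dim_succ_def by simp
qed

section \<open>Splitting a complex into two subcomplexes\<close>

lemma coface_in_part:
  assumes M: "is_complex M" and "H \<inter> M = {}" "F \<in> H" "F \<noteq> {}" "F \<subseteq> Fb" "Fb \<in> H \<union> M"
  shows "Fb \<in> H"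
  using assms unfolding is_complex_def by blast

locale complex_split =
  fixes K H M :: "'a::linorder set set"
  assumes finite_K: "finite K" and union: "K = H \<union> M" and disjoint: "H \<inter> M = {}"
    and complex_H: "is_complex H" and complex_M: "is_complex M"
begin

lemma finite_H: "finite H" and finite_M: "finite M"
  using finite_K union by auto

lemma up_lap_in_H:
  assumes "F \<in> faces n H"
  shows "up_lap K w n \<phi> F = up_lap H w n \<phi> F"
proof (rule up_lap_subcomplex[OF complex_H])
  fix Fb assume "Fb \<in> faces (n + 1) K" "F \<subseteq> Fb"
  then show "Fb \<in> H"
    using coface_in_part[OF complex_M disjoint] assms face_nonempty[OF assms] union
    unfolding faces_def by auto
qed (use union in auto)

lemma up_lap_in_M:
  assumes "F \<in> faces n M"
  shows "up_lap K w n \<phi> F = up_lap M w n \<phi> F"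
proof (rule up_lap_subcomplex[OF complex_M])
  fix Fb assume "Fb \<in> faces (n + 1) K" "F \<subseteq> Fb"
  then show "Fb \<in> M"
    using coface_in_part[OF complex_H, of M] disjoint assms face_nonempty[OF assms] union
    unfolding faces_def by auto
qed (use union in auto)

lemma up_lap_cross_zero:
  assumes "F \<in> faces n H" "G \<in> faces n M"
  shows "up_lap K w n (ind_face G) F = 0" and "up_lap K w n (ind_face F) G = 0"
proof -
  have "G \<notin> faces n H" "F \<notin> faces n M"
    using assms disjoint unfolding faces_def by auto
  then show "up_lap K w n (ind_face G) F = 0" "up_lap K w n (ind_face F) G = 0"
    using assms by (simp_all add: up_lap_in_H up_lap_in_M up_lap_ind_face_outside)
qed

lemma char_poly_up_lap_mat_split:
  fixes w :: "'a set \<Rightarrow> real" and n :: nat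
  defines "E \<equiv> \<lambda>F G. up_lap K w n (ind_face G) F"
  shows "char_poly (up_lap_mat K w n) =
    char_poly (list_mat (face_list n H) (face_list n H) E) * char_poly (list_mat (face_list n M) (face_list n M) E)"
proof -
  let ?hs = "face_list n H" and ?ms = "face_list n M"
  have "distinct (?hs @ ?ms)"
    using distinct_face_list[OF finite_H] distinct_face_list[OF finite_M]
      set_face_list[OF finite_H] set_face_list[OF finite_M] disjoint
    unfolding faces_def by auto
  moreover have "set (?hs @ ?ms) = set (face_list n K)"
    using set_face_list[OF finite_H] set_face_list[OF finite_M] set_face_list[OF finite_K] union
    unfolding faces_def by auto
  ultimately have "char_poly (up_lap_mat K w n) = char_poly (list_mat (?hs @ ?ms) (?hs @ ?ms) E)"
    unfolding up_lap_mat_eq_list_mat E_def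
    by (intro char_poly_similar list_mat_reindex_similar distinct_face_list[OF finite_K]) auto
  also have "list_mat (?hs @ ?ms) (?hs @ ?ms) E = four_block_mat (list_mat ?hs ?hs E)
      (0\<^sub>m (length ?hs) (length ?ms)) (0\<^sub>m (length ?ms) (length ?hs)) (list_mat ?ms ?ms E)"
    using up_lap_cross_zero set_face_list[OF finite_H] set_face_list[OF finite_M]
    unfolding E_def by (intro list_mat_append_block_diag) auto
  finally show ?thesis by (simp add: char_poly_block_diag)
qed

lemma char_poly_up_lap_mat_unit_weight_split:
  "char_poly (up_lap_mat K (\<lambda>_. 1) n) =
    char_poly (up_lap_mat H (\<lambda>_. 1) n) * char_poly (up_lap_mat M (\<lambda>_. 1) n)"
proof -
  have "list_mat (face_list n H) (face_list n H) (\<lambda>F G. up_lap K (\<lambda>_. 1) n (ind_face G) F) =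
      up_lap_mat H (\<lambda>_. 1) n"
    unfolding up_lap_mat_eq_list_mat
    by (rule list_mat_cong) (simp add: up_lap_in_H set_face_list[OF finite_H])
  moreover have "list_mat (face_list n M) (face_list n M) (\<lambda>F G. up_lap K (\<lambda>_. 1) n (ind_face G) F) =
      up_lap_mat M (\<lambda>_. 1) n"
    unfolding up_lap_mat_eq_list_mat
    by (rule list_mat_cong) (simp add: up_lap_in_M set_face_list[OF finite_M])
  ultimately show ?thesis by (simp add: char_poly_up_lap_mat_split)
qed

lemma char_poly_up_lap_mat_vanishing_on_H:
  "char_poly (up_lap_mat K (\<lambda>F. 1 - (if F \<in> H then 1 else 0)) n) =
    [:0, 1:] ^ card (faces n H) * char_poly (up_lap_mat M (\<lambda>_. 1) n)"
proof -
  let ?w = "\<lambda>F. (1::real) - (if F \<in> H then 1 else 0)"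
  let ?hs = "face_list n H"
  \<comment> \<open>cob_adj vanishes at faces of weight zero, so the rows of the H-faces are zero\<close>
  have "list_mat ?hs ?hs (\<lambda>F G. up_lap K ?w n (ind_face G) F) = 0\<^sub>m (card (faces n H)) (card (faces n H))"
  proof (rule eq_matI)
    fix i k assume "i < dim_row (0\<^sub>m (card (faces n H)) (card (faces n H)) :: real mat)"
      and "k < dim_col (0\<^sub>m (card (faces n H)) (card (faces n H)) :: real mat)"
    moreover from this have "?hs ! i \<in> H"
      using face_list_nth[OF finite_H, of i n] faces_subset[of n H] by auto
    ultimately show "list_mat ?hs ?hs (\<lambda>F G. up_lap K ?w n (ind_face G) F) $$ (i, k) =
        0\<^sub>m (card (faces n H)) (card (faces n H)) $$ (i, k)"
      by (simp add: length_face_list[OF finite_H] up_lap_def cob_adj_def)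
  qed (simp_all add: length_face_list[OF finite_H])
  moreover have "up_lap K ?w n \<phi> F = up_lap M (\<lambda>_. 1) n \<phi> F" if "F \<in> faces n M" for \<phi> F
  proof -
    have "up_lap M ?w n \<phi> F = up_lap M (\<lambda>_. 1) n \<phi> F"
      using that disjoint by (intro up_lap_weight_cong) (auto simp: faces_def)
    then show ?thesis using up_lap_in_M[OF that] by simp
  qed
  then have "list_mat (face_list n M) (face_list n M) (\<lambda>F G. up_lap K ?w n (ind_face G) F) =
      up_lap_mat M (\<lambda>_. 1) n"
    unfolding up_lap_mat_eq_list_mat by (rule list_mat_cong) (simp add: set_face_list[OF finite_M])
  ultimately show ?thesis by (simp add: char_poly_up_lap_mat_split char_poly_zero_mat)
qed

lemma spectra_split:
  fixes lam theta :: "nat \<Rightarrow> real" and n :: nat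
  defines "N \<equiv> card (faces n K)"
  assumes lam: "char_poly (up_lap_mat K (\<lambda>_. 1) n) = (\<Prod>k=1..N. [:- lam k, 1:])"
    and theta: "char_poly (up_lap_mat K (\<lambda>F. 1 - (if F \<in> H then 1 else 0)) n) = (\<Prod>k=1..N. [:- theta k, 1:])"
  obtains R where "image_mset lam (mset_set {1..N}) = R + proots (char_poly (up_lap_mat M (\<lambda>_. 1) n))"
    and "image_mset theta (mset_set {1..N}) = replicate_mset (size R) 0 + proots (char_poly (up_lap_mat M (\<lambda>_. 1) n))"
    and "size R = card (faces n H)"
    and "card (faces n H) - vec_space.rank (dim_row (cob_mat H n)) (cob_mat H n) \<le> count R 0"
proof -
  let ?\<chi>H = "char_poly (up_lap_mat H (\<lambda>_. 1) n)" and ?\<chi>M = "char_poly (up_lap_mat M (\<lambda>_. 1) n)"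
  have carrier: "up_lap_mat H (\<lambda>_. 1) n \<in> carrier_mat (card (faces n H)) (card (faces n H))"
    unfolding up_lap_mat_eq_list_mat carrier_mat_def by (simp add: length_face_list[OF finite_H])
  have "?\<chi>H dvd (\<Prod>k=1..N. [:- lam k, 1:])"
    unfolding lam[symmetric] char_poly_up_lap_mat_unit_weight_split by (rule dvd_triv_left)
  then obtain bs where bs: "?\<chi>H = (\<Prod>b\<leftarrow>bs. [:- b, 1:])" "length bs = card (faces n H)"
    by (rule char_poly_dvd_split[OF carrier finite_atLeastAtMost])
  have "?\<chi>H * ?\<chi>M \<noteq> 0"
    unfolding char_poly_up_lap_mat_unit_weight_split[symmetric] lam by (simp add: prod_zero_iff)
  then have nonzero: "?\<chi>H \<noteq> 0" "?\<chi>M \<noteq> 0" by auto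
  show thesis
  proof
    have "image_mset lam (mset_set {1..N}) = proots (char_poly (up_lap_mat K (\<lambda>_. 1) n))"
      unfolding lam by (simp add: proots_prod_linear)
    then show "image_mset lam (mset_set {1..N}) = proots ?\<chi>H + proots ?\<chi>M"
      unfolding char_poly_up_lap_mat_unit_weight_split proots_mult[OF nonzero] .
    show size_R: "size (proots ?\<chi>H) = card (faces n H)"
      using bs by (simp add: proots_prod_list_linear)
    have "image_mset theta (mset_set {1..N}) =
        proots (char_poly (up_lap_mat K (\<lambda>F. 1 - (if F \<in> H then 1 else 0)) n))"
      unfolding theta by (simp add: proots_prod_linear)
    also have "\<dots> = proots ([:0, 1:] ^ card (faces n H)) + proots ?\<chi>M"
      unfolding char_poly_up_lap_mat_vanishing_on_H by (rule proots_mult) (simp_all add: nonzero(2))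
    finally show "image_mset theta (mset_set {1..N}) = replicate_mset (size (proots ?\<chi>H)) 0 + proots ?\<chi>M"
      unfolding size_R by (simp add: proots_power repeat_mset_replicate_mset del: pCons_0_as_mult)
    show "card (faces n H) - vec_space.rank (dim_row (cob_mat H n)) (cob_mat H n) \<le> count (proots ?\<chi>H) 0"
      using card_faces_minus_rank_le_order_zero[OF finite_H bs(1)] nonzero by simp
  qed
qed

end

theorem theorem2p10:
  fixes V :: "'a::linorder set" and K H :: "'a set set" and n :: nat
    and lam theta :: "nat \<Rightarrow> real"
  assumes K: "complex_on V K" "complex_dim K (n+1)"
    and H: "is_complex H" "H \<subseteq> K" "complex_dim H (n+1)"
    and L: "is_complex {F \<in> K. (\<lambda>F. (1::real) - (if F \<in> H then 1 else 0)) F > 0}"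
    and lam: "\<forall>i j. 1 \<le> i \<longrightarrow> i \<le> j \<longrightarrow> j \<le> card (faces n K) \<longrightarrow> lam i \<le> lam j"
      "char_poly (up_lap_mat K (\<lambda>F. 1) n) = (\<Prod>k=1..card (faces n K). [:- lam k, 1:])"
    and theta: "\<forall>i j. 1 \<le> i \<longrightarrow> i \<le> j \<longrightarrow> j \<le> card (faces n K) \<longrightarrow> theta i \<le> theta j"
      "char_poly (up_lap_mat K (\<lambda>F. (1::real) - (if F \<in> H then 1 else 0)) n)
         = (\<Prod>k=1..card (faces n K). [:- theta k, 1:])"
  shows "let N = card (faces n K);
             DW = card (faces (n+1) H) - cohom_dim_succ H n;
             DH = card (faces n H);
             lam' = (\<lambda>j::int. if j \<le> 0 then 0
                              else if j > int N then real (card V) else lam (nat j))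
         in \<forall>k\<in>{1..N}. lam' (int k - int DW) \<le> theta k \<and> theta k \<le> lam' (int k + int DH)"
proof -
  let ?N = "card (faces n K)" and ?M = "proots (char_poly (up_lap_mat (K - H) (\<lambda>_. 1) n))"
  have V: "K \<subseteq> Pow V" "finite V" using K(1) unfolding complex_on_def by auto
  then have "finite K" by (metis finite_Pow_iff finite_subset)
  moreover have "{F \<in> K. (1::real) - (if F \<in> H then 1 else 0) > 0} = K - H" by auto
  ultimately interpret complex_split K H "K - H"
    using H(1,2) L by unfold_locales auto
  obtain R where spec_lam: "image_mset lam (mset_set {1..?N}) = R + ?M"
    and spec_theta: "image_mset theta (mset_set {1..?N}) = replicate_mset (size R) 0 + ?M"
    and size_R: "size R = card (faces n H)"
    and zeros_R: "card (faces n H) - vec_space.rank (dim_row (cob_mat H n)) (cob_mat H n) \<le> count R 0"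
    using spectra_split[OF lam(2) theta(2)] by blast
  have "faces (n + 2) H = {}" using H(3) unfolding complex_dim_def faces_def by fastforce
  then have zeros: "size R \<le> count R 0 + (card (faces (n+1) H) - cohom_dim_succ H n)"
    using zeros_R size_R top_cohom_codim_eq_rank[OF finite_H] by simp
  have range: "\<forall>x\<in>#R + ?M. 0 \<le> x \<and> x \<le> real (card V)"
    unfolding spec_lam[symmetric] using spectrum_in_range[OF V lam(2)] by blast
  show ?thesis
    unfolding Let_def size_R[symmetric]
    using interlacing_padded[OF lam(1) theta(1) spec_lam spec_theta zeros range] by simp
qed

end
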